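(* Let $\mathbf T$ be a countably infinite homogeneous tournament and $\mathbf T^*$ an expansion of $\mathbf T$ as in the context. If $\mathrm{Age}(\mathbf T^* )$ has the expansion property relative to $\mathrm{Age}(\mathbf T)$, then $\mathrm{Age}(I_\omega[\mathbf T]^* )$ has the expansion property relative to $\mathrm{Age}(I_\omega[\mathbf T])$, where $I_\omega[\mathbf T]$ is the reduct of $I_\omega[\mathbf T]^*$ to $\{E\}$.
   Context: The age $\mathrm{Age}(\mathbf F)$ of a structure $\mathbf F$ is the class of finite structures embeddable in $\mathbf F$. Expansion property: let $L\subseteq L^*$ be relational languages, $\mathcal K$ a class of finite $L$-structures and $\mathcal K^*$ a class of finite $L^*$-structures whose $L$-reducts lie in $\mathcal K$. $\mathcal K^*$ has the expansion property relative to $\mathcal K$ if for every $\mathbf A\in\mathcal K$ there is $\mathbf B\in\mathcal K$ such that for all $\mathbf A^*,\mathbf B^*\in\mathcal K^*$ whose $L$-reducts are $\mathbf A$ and $\mathbf B$ respectively, $\mathbf A^*$ embeds into $\mathbf B^*$. A tournament is a directed graph in which every pair of distinct vertices carries exactly one directed edge; it is homogeneous if every isomorphism between finite substructures extends to an automorphism. $\mathbf T=(T,E^{\mathbf T})$ is a countable homogeneous tournament, and $\mathbf T^*$ is an expansion of $\mathbf T$ to a countable relational language $L_{\mathbf T^*}\supseteq\{E,<\}$ in which $<$ is interpreted as a linear order $<^*$ on $T$. Fix a linear order $\prec$ on $\mathbb N$ with $(\mathbb N,\prec)\cong(\mathbb Q,<)$. The structure $I_\omega[\mathbf T]^*$ has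 universe $\mathbb N\times T$ and language $L_{\mathbf T^*}$, interpreted as: for each $m$-ary $R\in L_{\mathbf T^*}\setminus\{<\}$ (including $E$), $R((k_1,x_1),\dots,(k_m,x_m))$ iff $k_1=\dots=k_m$ and $R^{\mathbf T^*}(x_1,\dots,x_m)$; and $(i,x)<(j,y)$ iff $i\prec j$, or $i=j$ and $x<^*y$. *)

theory Defs
  imports Main "HOL-Library.Countable_Set"
begin

record ('l, 'a) rstruct =
  univ :: "'a set"
  rel :: "'l \<Rightarrow> 'a list \<Rightarrow> bool"

definition is_struct :: "'l set \<Rightarrow> ('l \<Rightarrow> nat) \<Rightarrow> ('l, 'a) rstruct \<Rightarrow> bool" where
  "is_struct L ar S \<longleftrightarrow>
     (\<forall>R xs. rel S R xs \<longrightarrow> R \<in> L \<and> length xs = ar R \<and> set xs \<subseteq> univ S)"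

definition reduct :: "'l set \<Rightarrow> ('l, 'a) rstruct \<Rightarrow> ('l, 'a) rstruct" where
  "reduct L' S = \<lparr>univ = univ S, rel = (\<lambda>R xs. R \<in> L' \<and> rel S R xs)\<rparr>"

definition embedding :: "'l set \<Rightarrow> ('l \<Rightarrow> nat) \<Rightarrow> ('a \<Rightarrow> 'b)
    \<Rightarrow> ('l, 'a) rstruct \<Rightarrow> ('l, 'b) rstruct \<Rightarrow> bool" where
  "embedding L ar f A B \<longleftrightarrow>
     inj_on f (univ A) \<and> f ` univ A \<subseteq> univ B \<and>
     (\<forall>R\<in>L. \<forall>xs. set xs \<subseteq> univ A \<and> length xs = ar R \<longrightarrow>
        (rel A R xs \<longleftrightarrow> rel B R (map f xs)))"

text \<open>The age: all finite L-structures embeddable in F. Up to isomorphism every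
  finite structure has a copy with universe a subset of nat, so we take
  representatives with universes in nat.\<close>
definition Age :: "'l set \<Rightarrow> ('l \<Rightarrow> nat) \<Rightarrow> ('l, 'a) rstruct \<Rightarrow> ('l, nat) rstruct set" where
  "Age L ar F = {A. is_struct L ar A \<and> finite (univ A) \<and> (\<exists>f. embedding L ar f A F)}"

definition expansion_property :: "'l set \<Rightarrow> 'l set \<Rightarrow> ('l \<Rightarrow> nat)
    \<Rightarrow> ('l, nat) rstruct set \<Rightarrow> ('l, nat) rstruct set \<Rightarrow> bool" where
  "expansion_property L Ls ar K Ks \<longleftrightarrow>
     (\<forall>A\<in>K. \<exists>B\<in>K. \<forall>As\<in>Ks. \<forall>Bs\<in>Ks.
        reduct L As = A \<longrightarrow> reduct L Bs = B \<longrightarrow> (\<exists>f. embedding Ls ar f As Bs))"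

definition tournament :: "'l \<Rightarrow> ('l, 'a) rstruct \<Rightarrow> bool" where
  "tournament E S \<longleftrightarrow>
     (\<forall>x\<in>univ S. \<not> rel S E [x, x]) \<and>
     (\<forall>x\<in>univ S. \<forall>y\<in>univ S. x \<noteq> y \<longrightarrow> (rel S E [x, y] \<longleftrightarrow> \<not> rel S E [y, x]))"

definition homogeneous :: "'l set \<Rightarrow> ('l \<Rightarrow> nat) \<Rightarrow> ('l, 'a) rstruct \<Rightarrow> bool" where
  "homogeneous L ar S \<longleftrightarrow>
     (\<forall>X Y g. finite X \<and> X \<subseteq> univ S \<and> Y \<subseteq> univ S \<and> bij_betw g X Y \<and>
        (\<forall>R\<in>L. \<forall>xs. set xs \<subseteq> X \<and> length xs = ar R \<longrightarrow> (rel S R xs \<longleftrightarrow> rel S R (map g xs)))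
      \<longrightarrow> (\<exists>\<sigma>. bij_betw \<sigma> (univ S) (univ S) \<and>
            (\<forall>R\<in>L. \<forall>xs. set xs \<subseteq> univ S \<and> length xs = ar R \<longrightarrow>
               (rel S R xs \<longleftrightarrow> rel S R (map \<sigma> xs))) \<and>
            (\<forall>x\<in>X. \<sigma> x = g x)))"

definition strict_linear :: "'l \<Rightarrow> ('l, 'a) rstruct \<Rightarrow> bool" where
  "strict_linear Lt S \<longleftrightarrow>
     (\<forall>x\<in>univ S. \<not> rel S Lt [x, x]) \<and>
     (\<forall>x\<in>univ S. \<forall>y\<in>univ S. \<forall>z\<in>univ S. rel S Lt [x, y] \<and> rel S Lt [y, z] \<longrightarrow> rel S Lt [x, z]) \<and>
     (\<forall>x\<in>univ S. \<forall>y\<in>univ S. x \<noteq> y \<longrightarrow> rel S Lt [x, y] \<or> rel S Lt [y, x])"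

definition I_omega_star :: "'l \<Rightarrow> (nat \<Rightarrow> nat \<Rightarrow> bool) \<Rightarrow> ('l, 'a) rstruct
    \<Rightarrow> ('l, nat \<times> 'a) rstruct" where
  "I_omega_star Lt prec Ts =
     \<lparr>univ = UNIV \<times> univ Ts,
      rel = (\<lambda>R xs.
        if R = Lt then
          (\<exists>i x j y. xs = [(i, x), (j, y)] \<and> x \<in> univ Ts \<and> y \<in> univ Ts \<and>
             (prec i j \<or> (i = j \<and> rel Ts Lt [x, y])))
        else
          (\<forall>p\<in>set xs. \<forall>q\<in>set xs. fst p = fst q) \<and> rel Ts R (map snd xs))\<rparr>"

end

theory Submission
  imports Defs
begin

text \<open>Two points of a finite substructure of \<open>I\<^sub>\<omega>[T]\<close> lie in the same copy of \<open>T\<close> iff they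
  are equal or \<open>E\<close>-adjacent, since \<open>T\<close> is a tournament and there are no edges across copies.
  Hence an \<open>E\<close>-structure \<open>A\<close> and all its expansions are split into the same blocks, and every
  block lies in the age of \<open>T\<close>. Choose for each block \<open>k\<close> a witness \<open>B\<^sub>k\<close> of the expansion
  property of \<open>T\<^sup>*\<close>, embed all \<open>B\<^sub>k\<close> into one finite \<open>S \<subseteq> T\<close>, and let \<open>B\<close> consist of as many
  copies of \<open>S\<close> as \<open>A\<close> has blocks. Given expansions \<open>A\<^sup>*\<close> and \<open>B\<^sup>*\<close>, match the copies met by
  \<open>A\<^sup>*\<close> with those of \<open>B\<^sup>*\<close> preserving their order \<open>\<prec>\<close>, and embed each block of \<open>A\<^sup>*\<close> into the
  part of the matched copy lying over \<open>B\<^sub>k\<close>: that part is an expansion of \<open>B\<^sub>k\<close> inside a single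
  copy, hence in the age of \<open>T\<^sup>*\<close>. Across copies only \<open><\<close> holds and it is decided by \<open>\<prec>\<close>, so
  the glued map is an embedding.\<close>

definition pullback :: "('l, 'b) rstruct \<Rightarrow> 'a set \<Rightarrow> ('a \<Rightarrow> 'b) \<Rightarrow> ('l, 'a) rstruct" where
  "pullback D Y m = \<lparr>univ = Y, rel = (\<lambda>R xs. set xs \<subseteq> Y \<and> rel D R (map m xs))\<rparr>"

lemma pullback_simps [simp]:
  "univ (pullback D Y m) = Y"
  "rel (pullback D Y m) R xs \<longleftrightarrow> set xs \<subseteq> Y \<and> rel D R (map m xs)"
  by (simp_all add: pullback_def)

lemma reduct_simps [simp]:
  "univ (reduct L D) = univ D"
  "rel (reduct L D) R xs \<longleftrightarrow> R \<in> L \<and> rel D R xs"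
  by (simp_all add: reduct_def)

lemma is_struct_pullback: "is_struct L ar D \<Longrightarrow> is_struct L ar (pullback D Y m)"
  unfolding is_struct_def pullback_simps by (metis length_map)

lemma is_struct_reduct: "is_struct L' ar D \<Longrightarrow> is_struct L ar (reduct L D)"
  unfolding is_struct_def by auto

lemma reduct_pullback: "reduct L (pullback D Y m) = pullback (reduct L D) Y m"
  by (simp add: reduct_def pullback_def) (intro ext; blast)

lemma pullback_pullback:
  "m ` Y \<subseteq> X \<Longrightarrow> pullback (pullback D X n) Y m = pullback D Y (n \<circ> m)"
  by (auto simp: pullback_def fun_eq_iff)

lemma pullback_cong:
  assumes "\<And>y. y \<in> Y \<Longrightarrow> m y = m' y"
  shows "pullback D Y m = pullback D Y m'"
proof -
  have "map m xs = map m' xs" if "set xs \<subseteq> Y" for xs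
    using that assms by (auto intro: map_cong)
  then show ?thesis unfolding pullback_def by metis
qed

lemma embedding_rel:
  "embedding L ar g C D \<Longrightarrow> R \<in> L \<Longrightarrow> set xs \<subseteq> univ C \<Longrightarrow> length xs = ar R \<Longrightarrow>
    rel C R xs \<longleftrightarrow> rel D R (map g xs)"
  unfolding embedding_def by blast

lemma embedding_mem: "embedding L ar g C D \<Longrightarrow> x \<in> univ C \<Longrightarrow> g x \<in> univ D"
  unfolding embedding_def by blast

lemma embedding_inj:
  "embedding L ar g C D \<Longrightarrow> x \<in> univ C \<Longrightarrow> y \<in> univ C \<Longrightarrow> g x = g y \<Longrightarrow> x = y"
  unfolding embedding_def by (meson inj_onD)

lemma embedding_reduct_iff: "embedding L ar g C (reduct L D) \<longleftrightarrow> embedding L ar g C D"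
  by (simp add: embedding_def)

lemma embedding_reduct:
  "embedding L' ar g C D \<Longrightarrow> L \<subseteq> L' \<Longrightarrow> embedding L ar g (reduct L C) (reduct L D)"
  unfolding embedding_def by auto

lemma embedding_cong:
  "(\<And>x. x \<in> univ C \<Longrightarrow> g x = g' x) \<Longrightarrow> embedding L ar g C D \<longleftrightarrow> embedding L ar g' C D"
  unfolding embedding_def
  by (auto simp: subset_iff cong: inj_on_cong image_cong intro!: map_cong) (metis map_cong)+

lemma embedding_comp:
  assumes "embedding L ar g C D" and "embedding L ar g' D D'"
  shows "embedding L ar (g' \<circ> g) C D'"
  unfolding embedding_def
proof (intro conjI ballI allI impI)
  show "inj_on (g' \<circ> g) (univ C)"
    using assms by (auto simp: embedding_def intro: comp_inj_on inj_on_subset)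
  show "(g' \<circ> g) ` univ C \<subseteq> univ D'"
    using assms by (auto simp: embedding_def image_subset_iff)
next
  fix R xs assume "R \<in> L" and "set xs \<subseteq> univ C \<and> length xs = ar R"
  moreover have "set (map g xs) \<subseteq> univ D"
    using calculation embedding_mem[OF assms(1)] by auto
  ultimately show "rel C R xs \<longleftrightarrow> rel D' R (map (g' \<circ> g) xs)"
    using embedding_rel[OF assms(1)] embedding_rel[OF assms(2)] by simp
qed

lemma embedding_pullback:
  "inj_on m Y \<Longrightarrow> m ` Y \<subseteq> univ D \<Longrightarrow> embedding L ar m (pullback D Y m) D"
  by (simp add: embedding_def)

lemma AgeI: "is_struct L ar C \<Longrightarrow> finite (univ C) \<Longrightarrow> embedding L ar g C D \<Longrightarrow> C \<in> Age L ar D"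
  unfolding Age_def by auto

lemma Age_reduct: "Age L ar (reduct L D) = Age L ar D"
  by (simp add: Age_def embedding_reduct_iff)

lemma pullback_embedding_eq:
  assumes "is_struct L ar C" "is_struct L ar D" "embedding L ar g C D"
  shows "pullback D (univ C) g = C"
proof (rule rstruct.equality)
  show "rel (pullback D (univ C) g) = rel C"
  proof (intro ext)
    fix R xs
    have "rel C R xs \<longleftrightarrow> set xs \<subseteq> univ C \<and> rel D R (map g xs)"
    proof (cases "R \<in> L \<and> length xs = ar R")
      case True
      then show ?thesis using embedding_rel[OF assms(3)] assms(1) unfolding is_struct_def by blast
    next
      case False
      then show ?thesis using assms(1,2) unfolding is_struct_def by (metis length_map)
    qed
    then show "rel (pullback D (univ C) g) R xs = rel C R xs" by simp
  qed
qed simp_all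

definition nat_copy :: "('l, 'b) rstruct \<Rightarrow> 'b set \<Rightarrow> ('l, nat) rstruct" where
  "nat_copy D Y = pullback D (to_nat_on Y ` Y) (from_nat_into Y)"

lemma univ_nat_copy [simp]: "univ (nat_copy D Y) = to_nat_on Y ` Y"
  by (simp add: nat_copy_def)

lemma embedding_nat_copy:
  assumes "finite Y" "Y \<subseteq> univ D"
  shows "embedding L ar (from_nat_into Y) (nat_copy D Y) D"
  unfolding nat_copy_def
proof (rule embedding_pullback)
  show "inj_on (from_nat_into Y) (to_nat_on Y ` Y)"
    by (rule inj_on_inverseI[where g = "to_nat_on Y"]) simp
  show "from_nat_into Y ` to_nat_on Y ` Y \<subseteq> univ D"
    using assms by (auto simp: countable_finite)
qed

lemma nat_copy_in_Age:
  "is_struct L ar D \<Longrightarrow> finite Y \<Longrightarrow> Y \<subseteq> univ D \<Longrightarrow> nat_copy D Y \<in> Age L ar D"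
  by (rule AgeI[OF _ _ embedding_nat_copy]) (auto simp: nat_copy_def intro: is_struct_pullback)

lemma same_kernel_factor:
  assumes "\<And>x y. x \<in> X \<Longrightarrow> y \<in> X \<Longrightarrow> c1 x = c1 y \<longleftrightarrow> c2 x = c2 y"
  obtains P where "inj_on P (c1 ` X)" and "\<And>x. x \<in> X \<Longrightarrow> c2 x = P (c1 x)"
proof
  define P where "P k = c2 (SOME x. x \<in> X \<and> c1 x = k)" for k
  show factor: "c2 x = P (c1 x)" if "x \<in> X" for x
  proof -
    define y where "y = (SOME y. y \<in> X \<and> c1 y = c1 x)"
    have "y \<in> X \<and> c1 y = c1 x"
      unfolding y_def by (rule someI[where x = x]) (simp add: that)
    then show ?thesis
      using assms[of y x] that unfolding P_def y_def[symmetric] by simp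
  qed
  show "inj_on P (c1 ` X)"
    by (rule inj_onI) (use assms factor in force)
qed

definition rank :: "('k \<Rightarrow> 'b::linorder) \<Rightarrow> 'k set \<Rightarrow> 'k \<Rightarrow> nat" where
  "rank H K k = card {k' \<in> K. H k' < H k}"

lemma rank_less_iff:
  assumes "finite K" "inj_on H K" "k1 \<in> K" "k2 \<in> K"
  shows "rank H K k1 < rank H K k2 \<longleftrightarrow> H k1 < H k2"
proof -
  have mono: "rank H K k < rank H K k'" if "k \<in> K" "H k < H k'" for k k'
    unfolding rank_def using that assms(1) by (intro psubset_card_mono) auto
  show ?thesis
    using mono[of k1 k2] mono[of k2 k1] assms inj_onD[OF assms(2)]
    by (metis less_asym' linorder_neqE)
qed

lemma bij_betw_rank:
  assumes "finite K" "inj_on H K"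
  shows "bij_betw (rank H K) K {..<card K}"
proof -
  have inj: "inj_on (rank H K) K"
  proof (rule inj_onI)
    fix k1 k2 assume k: "k1 \<in> K" "k2 \<in> K" and eq: "rank H K k1 = rank H K k2"
    then have "H k1 = H k2"
      using rank_less_iff[OF assms k] rank_less_iff[OF assms k(2,1)] by (simp add: antisym_conv3)
    then show "k1 = k2" using assms(2) k by (meson inj_onD)
  qed
  moreover have "rank H K ` K \<subseteq> {..<card K}"
    unfolding rank_def using assms(1) by (auto intro!: psubset_card_mono)
  moreover have "card (rank H K ` K) = card {..<card K}"
    using inj by (simp add: card_image)
  ultimately show ?thesis
    by (simp add: bij_betw_def card_subset_eq)
qed

lemma order_matching:
  fixes H1 H2 :: "'k \<Rightarrow> 'b::linorder"
  assumes "finite K" "inj_on H1 K" "inj_on H2 K"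
  obtains \<sigma> where "bij_betw \<sigma> K K"
    and "\<And>k1 k2. k1 \<in> K \<Longrightarrow> k2 \<in> K \<Longrightarrow> H1 k1 < H1 k2 \<longleftrightarrow> H2 (\<sigma> k1) < H2 (\<sigma> k2)"
proof
  define \<sigma> where "\<sigma> = inv_into K (rank H2 K) \<circ> rank H1 K"
  note bij1 = bij_betw_rank[OF assms(1,2)] and bij2 = bij_betw_rank[OF assms(1,3)]
  show "bij_betw \<sigma> K K"
    unfolding \<sigma>_def using bij1 bij_betw_inv_into[OF bij2] by (rule bij_betw_trans)
  have rank_\<sigma>: "\<sigma> k \<in> K \<and> rank H2 K (\<sigma> k) = rank H1 K k" if "k \<in> K" for k
  proof -
    have "rank H1 K k \<in> rank H2 K ` K"
      using that bij1 bij2 by (metis bij_betw_apply bij_betw_imp_surj_on)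
    then show ?thesis unfolding \<sigma>_def by (simp add: inv_into_into f_inv_into_f)
  qed
  show "H1 k1 < H1 k2 \<longleftrightarrow> H2 (\<sigma> k1) < H2 (\<sigma> k2)" if "k1 \<in> K" "k2 \<in> K" for k1 k2
    using rank_\<sigma>[OF that(1)] rank_\<sigma>[OF that(2)] rank_less_iff[OF assms(1,2) that]
      rank_less_iff[OF assms(1,3), of "\<sigma> k1" "\<sigma> k2"] by auto
qed

lemma univ_I_omega_star [simp]: "univ (I_omega_star Lt prec Ts) = UNIV \<times> univ Ts"
  by (simp add: I_omega_star_def)

lemma rel_I_omega_star:
  "R \<noteq> Lt \<Longrightarrow> rel (I_omega_star Lt prec Ts) R xs \<longleftrightarrow>
     (\<forall>p\<in>set xs. \<forall>q\<in>set xs. fst p = fst q) \<and> rel Ts R (map snd xs)"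
  by (simp add: I_omega_star_def)

lemma rel_I_omega_star_pair:
  "R \<noteq> Lt \<Longrightarrow> rel (I_omega_star Lt prec Ts) R [p, q] \<longleftrightarrow> fst p = fst q \<and> rel Ts R [snd p, snd q]"
  by (auto simp: rel_I_omega_star)

lemma rel_I_omega_star_single_copy:
  "R \<noteq> Lt \<Longrightarrow> rel (I_omega_star Lt prec Ts) R (map (\<lambda>u. (c, h u)) xs) \<longleftrightarrow> rel Ts R (map h xs)"
  by (simp add: rel_I_omega_star comp_def)

lemma rel_I_omega_star_Lt:
  "rel (I_omega_star Lt prec Ts) Lt [p, q] \<longleftrightarrow>
     snd p \<in> univ Ts \<and> snd q \<in> univ Ts \<and>
     (prec (fst p) (fst q) \<or> fst p = fst q \<and> rel Ts Lt [snd p, snd q])"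
  by (cases p, cases q) (simp add: I_omega_star_def)

lemma is_struct_I_omega_star:
  assumes "is_struct Ls ar Ts" "Lt \<in> Ls" "ar Lt = 2"
  shows "is_struct Ls ar (I_omega_star Lt prec Ts)"
  unfolding is_struct_def
proof (intro allI impI)
  fix R xs assume r: "rel (I_omega_star Lt prec Ts) R xs"
  show "R \<in> Ls \<and> length xs = ar R \<and> set xs \<subseteq> univ (I_omega_star Lt prec Ts)"
  proof (cases "R = Lt")
    case True
    then show ?thesis using r assms(2,3) by (auto simp: I_omega_star_def)
  next
    case False
    then have "rel Ts R (map snd xs)" using r by (simp add: rel_I_omega_star)
    then show ?thesis using assms(1) unfolding is_struct_def by force
  qed
qed

lemma pullback_reduct_I_omega_star_copy:
  assumes "Lt \<notin> L"
  shows "pullback (reduct L (I_omega_star Lt prec Ts)) Y (\<lambda>u. (c, h u)) = pullback (reduct L Ts) Y h"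
proof -
  have "R \<in> L \<and> rel (I_omega_star Lt prec Ts) R (map (\<lambda>u. (c, h u)) xs) \<longleftrightarrow> R \<in> L \<and> rel Ts R (map h xs)"
    for R xs
    using assms rel_I_omega_star_single_copy[of R Lt] by blast
  then show ?thesis by (simp add: pullback_def)
qed

text \<open>Only the hypotheses the argument uses; of \<open>\<prec>\<close> it needs just that it is a strict linear
  order, witnessed by an order embedding \<open>pos\<close>.\<close>

locale tournament_copies =
  fixes E Lt :: 'l
    and Ls :: "'l set"
    and ar :: "'l \<Rightarrow> nat"
    and Ts :: "('l, 'a) rstruct"
    and prec :: "nat \<Rightarrow> nat \<Rightarrow> bool"
    and pos :: "nat \<Rightarrow> 'q::linorder"
  assumes E_in: "E \<in> Ls" and Lt_in: "Lt \<in> Ls" and E_neq_Lt: "E \<noteq> Lt"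
    and ar_E: "ar E = 2" and ar_Lt: "ar Lt = 2"
    and struct_Ts: "is_struct Ls ar Ts" and univ_Ts_nonempty: "univ Ts \<noteq> {}"
    and tournament_Ts: "tournament E (reduct {E} Ts)"
    and inj_pos: "inj pos" and prec_pos: "prec i j \<longleftrightarrow> pos i < pos j"
begin

abbreviation I :: "('l, nat \<times> 'a) rstruct" where
  "I \<equiv> I_omega_star Lt prec Ts"

lemma prec_irrefl: "\<not> prec i i"
  by (simp add: prec_pos)

lemma is_struct_I: "is_struct Ls ar I"
  using is_struct_I_omega_star[OF struct_Ts Lt_in ar_Lt] .

lemma embedding_into_copy:
  assumes emb: "embedding L ar g C I" and copy: "\<And>y. y \<in> univ C \<Longrightarrow> fst (g y) = c"
  shows "embedding L ar (snd \<circ> g) C Ts"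
  unfolding embedding_def
proof (intro conjI ballI allI impI)
  have "g x = g y" if "x \<in> univ C" "y \<in> univ C" "snd (g x) = snd (g y)" for x y
    using that copy by (simp add: prod_eq_iff)
  then show "inj_on (snd \<circ> g) (univ C)"
    using embedding_inj[OF emb] by (auto intro: inj_onI)
  show "(snd \<circ> g) ` univ C \<subseteq> univ Ts"
    using embedding_mem[OF emb] by (auto simp: mem_Times_iff)
next
  fix R xs assume R: "R \<in> L" and xs: "set xs \<subseteq> univ C \<and> length xs = ar R"
  then have rel_C: "rel C R xs \<longleftrightarrow> rel I R (map g xs)"
    using embedding_rel[OF emb] by blast
  show "rel C R xs \<longleftrightarrow> rel Ts R (map (snd \<circ> g) xs)"
  proof (cases "R = Lt")
    case True
    with xs ar_Lt obtain a b where "xs = [a, b]"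
      by (auto simp: length_Suc_conv numeral_2_eq_2)
    with rel_C True xs show ?thesis
      using copy embedding_mem[OF emb] prec_irrefl by (auto simp: rel_I_omega_star_Lt mem_Times_iff)
  next
    case False
    with rel_C xs show ?thesis
      using copy by (auto simp: rel_I_omega_star subset_iff)
  qed
qed

lemma pullback_copy_in_Age:
  assumes emb: "embedding L ar g C I" and "is_struct L ar C" "finite Y" "inj_on m Y" "m ` Y \<subseteq> univ C"
    and copy: "\<And>y. y \<in> Y \<Longrightarrow> fst (g (m y)) = c"
  shows "pullback C Y m \<in> Age L ar Ts"
proof (rule AgeI)
  have "embedding L ar (g \<circ> m) (pullback C Y m) I"
    using embedding_comp[OF embedding_pullback emb] assms(4,5) .
  then show "embedding L ar (snd \<circ> (g \<circ> m)) (pullback C Y m) Ts"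
    by (rule embedding_into_copy) (use copy in auto)
qed (use assms(2,3) is_struct_pullback in auto)

lemma not_rel_across_copies:
  assumes emb: "embedding L ar g C I" and "R \<in> L" "R \<noteq> Lt" "set xs \<subseteq> univ C" "length xs = ar R"
    and "x \<in> set xs" "y \<in> set xs" "fst (g x) \<noteq> fst (g y)"
  shows "\<not> rel C R xs"
proof
  assume "rel C R xs"
  then have "rel I R (map g xs)"
    using embedding_rel[OF emb assms(2,4,5)] by simp
  then have "\<forall>p\<in>set (map g xs). \<forall>q\<in>set (map g xs). fst p = fst q"
    unfolding rel_I_omega_star[OF assms(3)] by (rule conjunct1)
  moreover have "g x \<in> set (map g xs)" "g y \<in> set (map g xs)"
    using assms(6,7) by simp_all
  ultimately show False
    using assms(8) by blast
qed

lemma Lt_across_copies: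
  assumes emb: "embedding L ar g C I" and "Lt \<in> L" "a \<in> univ C" "b \<in> univ C" "fst (g a) \<noteq> fst (g b)"
  shows "rel C Lt [a, b] \<longleftrightarrow> prec (fst (g a)) (fst (g b))"
  using embedding_rel[OF emb assms(2), of "[a, b]"] embedding_mem[OF emb] assms(3-5) ar_Lt
  by (auto simp: rel_I_omega_star_Lt mem_Times_iff)

lemma tournament_edge:
  assumes "u \<in> univ Ts" "v \<in> univ Ts" "u \<noteq> v"
  shows "rel Ts E [u, v] \<or> rel Ts E [v, u]"
  using tournament_Ts assms unfolding tournament_def reduct_simps by blast

lemma same_copy_iff_adjacent:
  assumes emb: "embedding {E} ar g C I" and x: "x \<in> univ C" and y: "y \<in> univ C"
  shows "fst (g x) = fst (g y) \<longleftrightarrow> x = y \<or> rel C E [x, y] \<or> rel C E [y, x]"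
proof -
  have edge: "rel C E [u, v] \<longleftrightarrow> fst (g u) = fst (g v) \<and> rel Ts E [snd (g u), snd (g v)]"
    if "u \<in> univ C" "v \<in> univ C" for u v
    using embedding_rel[OF emb, of E "[u, v]"] that ar_E by (simp add: rel_I_omega_star_pair[OF E_neq_Lt])
  have "rel Ts E [snd (g x), snd (g y)] \<or> rel Ts E [snd (g y), snd (g x)]"
    if "fst (g x) = fst (g y)" "x \<noteq> y"
  proof (rule tournament_edge)
    show "snd (g x) \<noteq> snd (g y)"
      using that embedding_inj[OF emb x y] by (auto simp: prod_eq_iff)
    show "snd (g x) \<in> univ Ts" "snd (g y) \<in> univ Ts"
      using embedding_mem[OF emb] x y by (auto simp: mem_Times_iff)
  qed
  then show ?thesis
    unfolding edge[OF x y] edge[OF y x] by auto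
qed

lemma same_copy_transfer:
  assumes "embedding {E} ar g1 C I" "embedding {E} ar g2 C I" "x \<in> univ C" "y \<in> univ C"
  shows "fst (g1 x) = fst (g1 y) \<longleftrightarrow> fst (g2 x) = fst (g2 y)"
  using same_copy_iff_adjacent[OF assms(1,3,4)] same_copy_iff_adjacent[OF assms(2,3,4)] by simp

lemma rel_across_copies_iff:
  assumes gA: "embedding Ls ar gA As I" and gB: "embedding Ls ar gB Bs I"
    and R: "R \<in> Ls" and xs: "set xs \<subseteq> univ As" "length xs = ar R"
    and into: "set (map F xs) \<subseteq> univ Bs"
    and split: "x \<in> set xs" "y \<in> set xs" "fst (gA x) \<noteq> fst (gA y)"
    and copy: "\<And>x y. x \<in> set xs \<Longrightarrow> y \<in> set xs \<Longrightarrow>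
      fst (gA x) = fst (gA y) \<longleftrightarrow> fst (gB (F x)) = fst (gB (F y))"
    and order: "\<And>x y. x \<in> set xs \<Longrightarrow> y \<in> set xs \<Longrightarrow>
      prec (fst (gA x)) (fst (gA y)) \<longleftrightarrow> prec (fst (gB (F x))) (fst (gB (F y)))"
  shows "rel As R xs \<longleftrightarrow> rel Bs R (map F xs)"
proof (cases "R = Lt")
  case False
  have "fst (gB (F x)) \<noteq> fst (gB (F y))"
    using copy split by blast
  then show ?thesis
    using not_rel_across_copies[OF gA R False xs split] not_rel_across_copies[OF gB R False into]
      xs(2) split(1,2) by auto
next
  case True
  with xs ar_Lt obtain a b where ab: "xs = [a, b]"
    by (auto simp: length_Suc_conv numeral_2_eq_2)
  with split have a: "a \<in> set xs" and b: "b \<in> set xs" and diff: "fst (gA a) \<noteq> fst (gA b)"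
    by auto
  have "rel As Lt [a, b] \<longleftrightarrow> prec (fst (gA a)) (fst (gA b))"
    using Lt_across_copies[OF gA Lt_in] a b diff xs(1) by blast
  also have "\<dots> \<longleftrightarrow> prec (fst (gB (F a))) (fst (gB (F b)))"
    using order a b by blast
  also have "\<dots> \<longleftrightarrow> rel Bs Lt [F a, F b]"
    using Lt_across_copies[OF gB Lt_in] copy a b diff into ab by auto
  finally show ?thesis
    using True ab by simp
qed

lemma embedding_copywise:
  assumes gA: "embedding Ls ar gA As I" and gB: "embedding Ls ar gB Bs I"
    and into: "F ` univ As \<subseteq> univ Bs"
    and copy: "\<And>x y. x \<in> univ As \<Longrightarrow> y \<in> univ As \<Longrightarrow>
      fst (gA x) = fst (gA y) \<longleftrightarrow> fst (gB (F x)) = fst (gB (F y))"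
    and order: "\<And>x y. x \<in> univ As \<Longrightarrow> y \<in> univ As \<Longrightarrow>
      prec (fst (gA x)) (fst (gA y)) \<longleftrightarrow> prec (fst (gB (F x))) (fst (gB (F y)))"
    and blocks: "\<And>x0. x0 \<in> univ As \<Longrightarrow>
      embedding Ls ar F (pullback As {x \<in> univ As. fst (gA x) = fst (gA x0)} id) Bs"
  shows "embedding Ls ar F As Bs"
  unfolding embedding_def
proof (intro conjI ballI allI impI)
  show "inj_on F (univ As)"
  proof (rule inj_onI)
    fix x y assume x: "x \<in> univ As" and y: "y \<in> univ As" and eq: "F x = F y"
    then have "y \<in> univ (pullback As {x' \<in> univ As. fst (gA x') = fst (gA x)} id)"
      using copy[OF y x] by simp
    then show "x = y"
      using embedding_inj[OF blocks[OF x], of x y] x eq by simp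
  qed
  show "F ` univ As \<subseteq> univ Bs"
    by (rule into)
next
  fix R xs assume R: "R \<in> Ls" and xs: "set xs \<subseteq> univ As \<and> length xs = ar R"
  consider "xs = []" | x where "x \<in> univ As" "\<forall>y\<in>set xs. fst (gA y) = fst (gA x)"
    | x y where "x \<in> set xs" "y \<in> set xs" "fst (gA x) \<noteq> fst (gA y)"
    using xs by (cases xs) auto
  then show "rel As R xs \<longleftrightarrow> rel Bs R (map F xs)"
  proof cases
    case 1
    then show ?thesis using embedding_rel[OF gA R] embedding_rel[OF gB R] xs by simp
  next
    case (2 x)
    then show ?thesis using embedding_rel[OF blocks[OF 2(1)] R, of xs] xs by auto
  next
    case (3 x y)
    show ?thesis
    proof (rule rel_across_copies_iff[OF gA gB R _ _ _ 3])
      show "set (map F xs) \<subseteq> univ Bs"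
        using xs into by auto
    qed (use xs copy order in \<open>auto simp: subset_iff\<close>)
  qed
qed

lemma embedding_glue_copies:
  assumes gA: "embedding Ls ar gA As I" and gB: "embedding Ls ar gB Bs I"
    and blocks: "\<And>k. k \<in> \<kappa> ` univ As \<Longrightarrow> embedding Ls ar (Fk k) (pullback As {x \<in> univ As. \<kappa> x = k} id) Bs"
    and copyA: "\<And>x. x \<in> univ As \<Longrightarrow> fst (gA x) = PA (\<kappa> x)"
    and copyB: "\<And>x. x \<in> univ As \<Longrightarrow> fst (gB (Fk (\<kappa> x) x)) = PB (\<kappa> x)"
    and inj: "inj_on PA (\<kappa> ` univ As)" "inj_on PB (\<kappa> ` univ As)"
    and order: "\<And>k1 k2. k1 \<in> \<kappa> ` univ As \<Longrightarrow> k2 \<in> \<kappa> ` univ As \<Longrightarrow>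
      prec (PA k1) (PA k2) \<longleftrightarrow> prec (PB k1) (PB k2)"
  shows "embedding Ls ar (\<lambda>x. Fk (\<kappa> x) x) As Bs"
proof (rule embedding_copywise[OF gA gB])
  let ?F = "\<lambda>x. Fk (\<kappa> x) x"
  have same_copy: "fst (gA x) = fst (gA y) \<longleftrightarrow> \<kappa> x = \<kappa> y" if "x \<in> univ As" "y \<in> univ As" for x y
    using that copyA inj_on_eq_iff[OF inj(1)] by auto
  show F_block: "embedding Ls ar ?F (pullback As {x \<in> univ As. fst (gA x) = fst (gA x0)} id) Bs"
    if "x0 \<in> univ As" for x0
  proof -
    have "{x \<in> univ As. fst (gA x) = fst (gA x0)} = {x \<in> univ As. \<kappa> x = \<kappa> x0}"
      using same_copy that by blast
    then show ?thesis
      using blocks[OF imageI[OF that]] by (subst embedding_cong[where g' = "Fk (\<kappa> x0)"]) auto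
  qed
  show "?F ` univ As \<subseteq> univ Bs"
    using embedding_mem[OF F_block] by fastforce
  show "fst (gA x) = fst (gA y) \<longleftrightarrow> fst (gB (?F x)) = fst (gB (?F y))"
    if "x \<in> univ As" "y \<in> univ As" for x y
    using same_copy[OF that] copyB[OF that(1)] copyB[OF that(2)] inj_on_eq_iff[OF inj(2)] that by auto
  show "prec (fst (gA x)) (fst (gA y)) \<longleftrightarrow> prec (fst (gB (?F x))) (fst (gB (?F y)))"
    if "x \<in> univ As" "y \<in> univ As" for x y
    using order[OF imageI[OF that(1)] imageI[OF that(2)]] copyA[OF that(1)] copyA[OF that(2)]
      copyB[OF that(1)] copyB[OF that(2)] by simp
qed

lemma embedding_nat_copy_I:
  assumes "finite X" "X \<subseteq> univ I"
  shows "embedding {E} ar (from_nat_into X) (nat_copy (reduct {E} I) X) I"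
proof -
  have "embedding {E} ar (from_nat_into X) (nat_copy (reduct {E} I) X) (reduct {E} I)"
    using assms by (intro embedding_nat_copy) simp_all
  then show ?thesis by (simp only: embedding_reduct_iff)
qed

lemma expansion_embedding_E:
  assumes "embedding Ls ar g C I" "reduct {E} C = D"
  shows "embedding {E} ar g D I"
  using embedding_reduct[OF assms(1), of "{E}"] assms(2) E_in by (simp add: embedding_reduct_iff)

lemma nat_copy_expansion_copies:
  assumes "finite K" "finite S" "S \<subseteq> univ Ts" "S \<noteq> {}"
    and red: "reduct {E} Bs = nat_copy (reduct {E} I) (K \<times> S)" and gB: "embedding Ls ar gB Bs I"
  obtains PB where "inj_on PB K"
    and "\<And>k s. k \<in> K \<Longrightarrow> s \<in> S \<Longrightarrow> fst (gB (to_nat_on (K \<times> S) (k, s))) = PB k"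
proof -
  let ?X = "K \<times> S"
  let ?B = "nat_copy (reduct {E} I) ?X"
  have fin: "finite ?X" and cnt: "countable ?X" using assms(1,2) by (auto intro: countable_finite)
  have kernel: "fst (from_nat_into ?X n) = fst (from_nat_into ?X n') \<longleftrightarrow> fst (gB n) = fst (gB n')"
    if "n \<in> univ ?B" "n' \<in> univ ?B" for n n'
    using same_copy_transfer[OF embedding_nat_copy_I expansion_embedding_E[OF gB red]] that fin assms(3)
    by auto
  obtain P where P: "inj_on P ((\<lambda>n. fst (from_nat_into ?X n)) ` univ ?B)"
    and factor: "\<And>n. n \<in> univ ?B \<Longrightarrow> fst (gB n) = P (fst (from_nat_into ?X n))"
    by (rule same_kernel_factor[of "univ ?B" "\<lambda>n. fst (from_nat_into ?X n)" "\<lambda>n. fst (gB n)"])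
      (use kernel in auto)
  have "(\<lambda>n. fst (from_nat_into ?X n)) ` univ ?B = K"
    using cnt assms(4) by (force simp: image_comp)
  then show ?thesis
    using that[of P] P factor cnt by simp
qed

lemma nat_copy_expansion_restrict:
  assumes "finite K" "finite S" "S \<subseteq> univ Ts" "S \<noteq> {}" "k \<in> K" "inj_on h Y" "h ` Y \<subseteq> S"
    and red: "reduct {E} Bs = nat_copy (reduct {E} I) (K \<times> S)"
    and Bs: "is_struct Ls ar Bs" "embedding Ls ar gB Bs I"
  defines "m \<equiv> \<lambda>u. to_nat_on (K \<times> S) (k, h u)"
  shows "reduct {E} (pullback Bs Y m) = pullback (reduct {E} Ts) Y h"
    and "embedding Ls ar m (pullback Bs Y m) Bs"
    and "pullback Bs Y m \<in> Age Ls ar Ts"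
proof -
  let ?X = "K \<times> S"
  have cnt: "countable ?X" using assms(1,2) by (auto intro: countable_finite)
  have m_into: "m ` Y \<subseteq> to_nat_on ?X ` ?X"
    using assms(5,7) by (auto simp: m_def)
  have "reduct {E} (pullback Bs Y m) = pullback (nat_copy (reduct {E} I) ?X) Y m"
    by (simp add: reduct_pullback red)
  also have "\<dots> = pullback (reduct {E} I) Y (from_nat_into ?X \<circ> m)"
    unfolding nat_copy_def using m_into by (rule pullback_pullback)
  also have "\<dots> = pullback (reduct {E} I) Y (\<lambda>u. (k, h u))"
    by (rule pullback_cong) (use assms(5,7) cnt in \<open>auto simp: m_def\<close>)
  also have "\<dots> = pullback (reduct {E} Ts) Y h"
    using E_neq_Lt by (simp add: pullback_reduct_I_omega_star_copy)
  finally show "reduct {E} (pullback Bs Y m) = pullback (reduct {E} Ts) Y h" .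
  obtain PB where PB: "\<And>s. s \<in> S \<Longrightarrow> fst (gB (to_nat_on ?X (k, s))) = PB k"
    using nat_copy_expansion_copies[OF assms(1-4) red Bs(2)] assms(5) by metis
  have "finite Y"
    using assms(2,6,7) by (metis finite_imageD finite_subset)
  moreover have inj_m: "inj_on m Y"
    using assms(5-7) cnt unfolding m_def by (auto simp: inj_on_def image_subset_iff)
  moreover have m_Bs: "m ` Y \<subseteq> univ Bs"
    using m_into red by (metis reduct_simps(1) univ_nat_copy)
  ultimately show "embedding Ls ar m (pullback Bs Y m) Bs"
    by (simp add: embedding_pullback)
  show "pullback Bs Y m \<in> Age Ls ar Ts"
    using \<open>finite Y\<close> inj_m m_Bs
    by (rule pullback_copy_in_Age[OF Bs(2) Bs(1), where c = "PB k"])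
      (use PB assms(7) in \<open>auto simp: m_def\<close>)
qed

lemma expansion_embeds_into_copy:
  assumes "finite K" "finite S" "S \<subseteq> univ Ts" "S \<noteq> {}" "k \<in> K"
    and red: "reduct {E} Bs = nat_copy (reduct {E} I) (K \<times> S)"
    and Bs: "is_struct Ls ar Bs" "embedding Ls ar gB Bs I"
    and copy: "\<And>s. s \<in> S \<Longrightarrow> fst (gB (to_nat_on (K \<times> S) (k, s))) = c"
    and Bk: "is_struct {E} ar Bk" "embedding {E} ar h Bk Ts" "h ` univ Bk \<subseteq> S"
    and C: "C \<in> Age Ls ar Ts" "reduct {E} C = Ak"
    and EP: "\<And>C D. C \<in> Age Ls ar Ts \<Longrightarrow> D \<in> Age Ls ar Ts \<Longrightarrow>
      reduct {E} C = Ak \<Longrightarrow> reduct {E} D = Bk \<Longrightarrow> \<exists>e. embedding Ls ar e C D"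
  obtains F where "embedding Ls ar F C Bs"
    and "\<And>x. x \<in> univ C \<Longrightarrow> fst (gB (F x)) = c"
proof -
  let ?m = "\<lambda>u. to_nat_on (K \<times> S) (k, h u)"
  let ?D = "pullback Bs (univ Bk) ?m"
  have inj_h: "inj_on h (univ Bk)"
    using Bk(2) by (simp add: embedding_def)
  note restrict = nat_copy_expansion_restrict[OF assms(1-5) inj_h Bk(3) red Bs]
  have "reduct {E} ?D = pullback (reduct {E} Ts) (univ Bk) h"
    using restrict(1) .
  also have "\<dots> = Bk"
    using Bk(1,2) is_struct_reduct[OF struct_Ts]
    by (intro pullback_embedding_eq) (auto simp: embedding_reduct_iff)
  finally obtain e where e: "embedding Ls ar e C ?D"
    using EP[OF C(1) restrict(3) C(2)] by blast
  show ?thesis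
  proof
    show "embedding Ls ar (?m \<circ> e) C Bs"
      using e restrict(2) by (rule embedding_comp)
    show "fst (gB ((?m \<circ> e) x)) = c" if "x \<in> univ C" for x
    proof -
      have "h (e x) \<in> S"
        using embedding_mem[OF e that] Bk(3) by auto
      then show ?thesis by (simp add: copy)
    qed
  qed
qed

lemma copy_matching:
  assumes f: "embedding {E} ar f A I" and gA: "embedding {E} ar gA A I"
    and K: "K = fst ` f ` univ A" "finite K" and S: "finite S" "S \<subseteq> univ Ts" "S \<noteq> {}"
    and red: "reduct {E} Bs = nat_copy (reduct {E} I) (K \<times> S)" and gB: "embedding Ls ar gB Bs I"
  obtains PA PB \<sigma> where "inj_on PA K" "inj_on PB K" "\<sigma> ` K \<subseteq> K"
    and "\<And>x. x \<in> univ A \<Longrightarrow> fst (gA x) = PA (fst (f x))"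
    and "\<And>k s. k \<in> K \<Longrightarrow> s \<in> S \<Longrightarrow> fst (gB (to_nat_on (K \<times> S) (\<sigma> k, s))) = PB k"
    and "\<And>k1 k2. k1 \<in> K \<Longrightarrow> k2 \<in> K \<Longrightarrow> prec (PA k1) (PA k2) \<longleftrightarrow> prec (PB k1) (PB k2)"
proof -
  obtain PA where PA: "inj_on PA K" and copyA: "\<And>x. x \<in> univ A \<Longrightarrow> fst (gA x) = PA (fst (f x))"
    by (rule same_kernel_factor[of "univ A" "\<lambda>x. fst (f x)" "\<lambda>x. fst (gA x)"])
      (use same_copy_transfer[OF f gA] K(1) in \<open>simp_all add: image_image\<close>)
  obtain PB where PB: "inj_on PB K"
    and copyB: "\<And>k s. k \<in> K \<Longrightarrow> s \<in> S \<Longrightarrow> fst (gB (to_nat_on (K \<times> S) (k, s))) = PB k"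
    using nat_copy_expansion_copies[OF K(2) S red gB] by blast
  have inj_pos_on: "inj_on pos Z" for Z
    using inj_pos by (rule inj_on_subset) simp
  obtain \<sigma> where \<sigma>: "bij_betw \<sigma> K K"
    and \<sigma>_order: "\<And>k1 k2. k1 \<in> K \<Longrightarrow> k2 \<in> K \<Longrightarrow>
      (pos \<circ> PA) k1 < (pos \<circ> PA) k2 \<longleftrightarrow> (pos \<circ> PB) (\<sigma> k1) < (pos \<circ> PB) (\<sigma> k2)"
    using order_matching[OF K(2) comp_inj_on[OF PA inj_pos_on] comp_inj_on[OF PB inj_pos_on]] by blast
  show ?thesis
  proof (rule that[of PA "PB \<circ> \<sigma>" \<sigma>])
    show "inj_on (PB \<circ> \<sigma>) K"
      using \<sigma> PB by (metis bij_betw_def comp_inj_on)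
    show "\<sigma> ` K \<subseteq> K"
      using \<sigma> by (simp add: bij_betw_def)
    show "fst (gB (to_nat_on (K \<times> S) (\<sigma> k, s))) = (PB \<circ> \<sigma>) k" if "k \<in> K" "s \<in> S" for k s
      using copyB[OF _ that(2)] \<sigma> that(1) by (simp add: bij_betwE)
    show "prec (PA k1) (PA k2) \<longleftrightarrow> prec ((PB \<circ> \<sigma>) k1) ((PB \<circ> \<sigma>) k2)" if "k1 \<in> K" "k2 \<in> K" for k1 k2
      using \<sigma>_order[OF that] by (simp add: prec_pos)
  qed (use PA copyA in auto)
qed

lemma embedding_of_expansions:
  assumes f: "embedding {E} ar f A I"
    and As: "As \<in> Age Ls ar I" "reduct {E} As = A"
    and Bs: "Bs \<in> Age Ls ar I" "reduct {E} Bs = nat_copy (reduct {E} I) (K \<times> S)"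
    and K: "K = fst ` f ` univ A"
    and S: "finite S" "S \<subseteq> univ Ts" "S \<noteq> {}"
    and Bk: "\<And>k. k \<in> K \<Longrightarrow>
      is_struct {E} ar (Bk k) \<and> embedding {E} ar (hk k) (Bk k) Ts \<and> hk k ` univ (Bk k) \<subseteq> S"
    and EP: "\<And>k C D. k \<in> K \<Longrightarrow> C \<in> Age Ls ar Ts \<Longrightarrow> D \<in> Age Ls ar Ts \<Longrightarrow>
      reduct {E} C = pullback A {x \<in> univ A. fst (f x) = k} id \<Longrightarrow> reduct {E} D = Bk k \<Longrightarrow>
      \<exists>e. embedding Ls ar e C D"
  shows "\<exists>F. embedding Ls ar F As Bs"
proof -
  obtain gA where AsS: "is_struct Ls ar As" "finite (univ As)" and gA: "embedding Ls ar gA As I"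
    using As(1) unfolding Age_def by blast
  obtain gB where BsS: "is_struct Ls ar Bs" and gB: "embedding Ls ar gB Bs I"
    using Bs(1) unfolding Age_def by blast
  have univ_As: "univ As = univ A"
    using As(2) by (metis reduct_simps(1))
  have copies: "(\<lambda>x. fst (f x)) ` univ As = K" and finK: "finite K"
    using K univ_As AsS(2) by (simp_all add: image_image)
  obtain PA PB \<sigma> where PA: "inj_on PA K" and PB: "inj_on PB K" and \<sigma>: "\<sigma> ` K \<subseteq> K"
    and copyA: "\<And>x. x \<in> univ A \<Longrightarrow> fst (gA x) = PA (fst (f x))"
    and copyB: "\<And>k s. k \<in> K \<Longrightarrow> s \<in> S \<Longrightarrow> fst (gB (to_nat_on (K \<times> S) (\<sigma> k, s))) = PB k"
    and order: "\<And>k1 k2. k1 \<in> K \<Longrightarrow> k2 \<in> K \<Longrightarrow> prec (PA k1) (PA k2) \<longleftrightarrow> prec (PB k1) (PB k2)"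
    using copy_matching[OF f expansion_embedding_E[OF gA As(2)] K finK S Bs(2) gB] by blast
  have "\<forall>k\<in>K. \<exists>Fk. embedding Ls ar Fk (pullback As {x \<in> univ As. fst (f x) = k} id) Bs \<and>
      (\<forall>x\<in>univ As. fst (f x) = k \<longrightarrow> fst (gB (Fk x)) = PB k)"
  proof
    fix k assume k: "k \<in> K"
    let ?C = "pullback As {x \<in> univ As. fst (f x) = k} id"
    have C: "?C \<in> Age Ls ar Ts" "reduct {E} ?C = pullback A {x \<in> univ A. fst (f x) = k} id"
      using AsS copyA univ_As
      by (auto intro: pullback_copy_in_Age[OF gA, where c = "PA k"] simp: reduct_pullback As(2))
    have \<sigma>k: "\<sigma> k \<in> K"
      using \<sigma> k by blast
    have Bk_k: "is_struct {E} ar (Bk k)" "embedding {E} ar (hk k) (Bk k) Ts"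
      "hk k ` univ (Bk k) \<subseteq> S"
      using Bk[OF k] by simp_all
    obtain Fk where Fk: "embedding Ls ar Fk ?C Bs" and Fk_copy: "\<And>x. x \<in> univ ?C \<Longrightarrow> fst (gB (Fk x)) = PB k"
      using expansion_embeds_into_copy[OF finK S \<sigma>k Bs(2) BsS gB copyB[OF k] Bk_k C EP[OF k]] by blast
    show "\<exists>Fk. embedding Ls ar Fk ?C Bs \<and> (\<forall>x\<in>univ As. fst (f x) = k \<longrightarrow> fst (gB (Fk x)) = PB k)"
      using Fk Fk_copy by (intro exI[of _ Fk]) simp
  qed
  from bchoice[OF this] obtain Fk where Fk: "\<forall>k\<in>K.
      embedding Ls ar (Fk k) (pullback As {x \<in> univ As. fst (f x) = k} id) Bs \<and>
      (\<forall>x\<in>univ As. fst (f x) = k \<longrightarrow> fst (gB (Fk k x)) = PB k)" ..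
  have "embedding Ls ar (\<lambda>x. Fk (fst (f x)) x) As Bs"
  proof (rule embedding_glue_copies[OF gA gB, where \<kappa> = "\<lambda>x. fst (f x)" and Fk = Fk and PA = PA and PB = PB])
    show "embedding Ls ar (Fk k) (pullback As {x \<in> univ As. fst (f x) = k} id) Bs"
      if "k \<in> (\<lambda>x. fst (f x)) ` univ As" for k
      using Fk that copies by blast
    show "fst (gA x) = PA (fst (f x))" "fst (gB (Fk (fst (f x)) x)) = PB (fst (f x))"
      if "x \<in> univ As" for x
      using copyA Fk that univ_As copies by auto
    show "inj_on PA ((\<lambda>x. fst (f x)) ` univ As)" "inj_on PB ((\<lambda>x. fst (f x)) ` univ As)"
      using PA PB copies by simp_all
    show "prec (PA k1) (PA k2) \<longleftrightarrow> prec (PB k1) (PB k2)"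
      if "k1 \<in> (\<lambda>x. fst (f x)) ` univ As" "k2 \<in> (\<lambda>x. fst (f x)) ` univ As" for k1 k2
      using order that copies by simp
  qed
  then show ?thesis by blast
qed

lemma copy_witnesses:
  assumes EP: "expansion_property {E} Ls ar (Age {E} ar Ts) (Age Ls ar Ts)"
    and A: "is_struct {E} ar A" "finite (univ A)" and f: "embedding {E} ar f A I"
  obtains Bk hk
  where "\<And>k. is_struct {E} ar (Bk k) \<and> finite (univ (Bk k)) \<and> embedding {E} ar (hk k) (Bk k) Ts"
    and "\<And>k C D. C \<in> Age Ls ar Ts \<Longrightarrow> D \<in> Age Ls ar Ts \<Longrightarrow>
      reduct {E} C = pullback A {x \<in> univ A. fst (f x) = k} id \<Longrightarrow> reduct {E} D = Bk k \<Longrightarrow>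
      \<exists>e. embedding Ls ar e C D"
proof -
  have "\<forall>k. \<exists>B. B \<in> Age {E} ar Ts \<and> (\<forall>C\<in>Age Ls ar Ts. \<forall>D\<in>Age Ls ar Ts.
      reduct {E} C = pullback A {x \<in> univ A. fst (f x) = k} id \<longrightarrow> reduct {E} D = B \<longrightarrow>
      (\<exists>e. embedding Ls ar e C D))"
  proof
    fix k
    have "pullback A {x \<in> univ A. fst (f x) = k} id \<in> Age {E} ar Ts"
      using A by (intro pullback_copy_in_Age[OF f, where c = k]) auto
    with EP show "\<exists>B. B \<in> Age {E} ar Ts \<and> (\<forall>C\<in>Age Ls ar Ts. \<forall>D\<in>Age Ls ar Ts.
      reduct {E} C = pullback A {x \<in> univ A. fst (f x) = k} id \<longrightarrow> reduct {E} D = B \<longrightarrow>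
      (\<exists>e. embedding Ls ar e C D))"
      unfolding expansion_property_def Bex_def by (rule bspec)
  qed
  from choice[OF this] obtain Bk where Bk: "\<forall>k. Bk k \<in> Age {E} ar Ts \<and>
      (\<forall>C\<in>Age Ls ar Ts. \<forall>D\<in>Age Ls ar Ts.
        reduct {E} C = pullback A {x \<in> univ A. fst (f x) = k} id \<longrightarrow> reduct {E} D = Bk k \<longrightarrow>
        (\<exists>e. embedding Ls ar e C D))" ..
  then have "\<forall>k. \<exists>h. is_struct {E} ar (Bk k) \<and> finite (univ (Bk k)) \<and> embedding {E} ar h (Bk k) Ts"
    unfolding Age_def by blast
  from choice[OF this] obtain hk where hk: "\<forall>k. is_struct {E} ar (Bk k) \<and> finite (univ (Bk k)) \<and>
      embedding {E} ar (hk k) (Bk k) Ts" ..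
  show ?thesis
  proof (rule that)
    show "is_struct {E} ar (Bk k) \<and> finite (univ (Bk k)) \<and> embedding {E} ar (hk k) (Bk k) Ts" for k
      using hk by blast
    show "\<exists>e. embedding Ls ar e C D"
      if "C \<in> Age Ls ar Ts" "D \<in> Age Ls ar Ts" "reduct {E} C = pullback A {x \<in> univ A. fst (f x) = k} id"
        "reduct {E} D = Bk k" for k C D
      using Bk that by blast
  qed
qed

lemma expansion_property_I_omega_star:
  assumes EP: "expansion_property {E} Ls ar (Age {E} ar Ts) (Age Ls ar Ts)"
  shows "expansion_property {E} Ls ar (Age {E} ar (reduct {E} I)) (Age Ls ar I)"
  unfolding expansion_property_def Age_reduct
proof
  fix A assume "A \<in> Age {E} ar I"
  then obtain f where A: "is_struct {E} ar A" "finite (univ A)" and f: "embedding {E} ar f A I"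
    unfolding Age_def by blast
  obtain Bk hk
    where hk: "\<And>k. is_struct {E} ar (Bk k) \<and> finite (univ (Bk k)) \<and> embedding {E} ar (hk k) (Bk k) Ts"
    and EPk: "\<And>k C D. C \<in> Age Ls ar Ts \<Longrightarrow> D \<in> Age Ls ar Ts \<Longrightarrow>
      reduct {E} C = pullback A {x \<in> univ A. fst (f x) = k} id \<Longrightarrow> reduct {E} D = Bk k \<Longrightarrow>
      \<exists>e. embedding Ls ar e C D"
    using copy_witnesses[OF EP A f] by blast
  define K where "K = fst ` f ` univ A"
  obtain t0 where t0: "t0 \<in> univ Ts"
    using univ_Ts_nonempty by blast
  \<comment> \<open>\<open>t0\<close> keeps \<open>S\<close> nonempty, so that every \<open>k \<in> K\<close> indexes a copy that really occurs in \<open>B\<close>.\<close>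
  define S where "S = insert t0 (\<Union>k\<in>K. hk k ` univ (Bk k))"
  have "hk k ` univ (Bk k) \<subseteq> univ Ts" for k
    using embedding_mem[of "{E}" ar "hk k" "Bk k" Ts] hk by blast
  then have S: "finite S" "S \<subseteq> univ Ts" "S \<noteq> {}"
    using A(2) hk t0 by (auto simp: S_def K_def)
  have "nat_copy (reduct {E} I) (K \<times> S) \<in> Age {E} ar I"
    using nat_copy_in_Age[OF is_struct_reduct[OF is_struct_I], of "K \<times> S"] A(2) S
    by (auto simp: K_def Age_reduct)
  moreover have "\<exists>F. embedding Ls ar F As Bs"
    if "As \<in> Age Ls ar I" "Bs \<in> Age Ls ar I" "reduct {E} As = A"
      "reduct {E} Bs = nat_copy (reduct {E} I) (K \<times> S)" for As Bs
    using embedding_of_expansions[OF f that(1,3,2,4) K_def S, of Bk hk] hk EPk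
    by (auto simp: S_def)
  ultimately show "\<exists>B\<in>Age {E} ar I. \<forall>As\<in>Age Ls ar I. \<forall>Bs\<in>Age Ls ar I.
      reduct {E} As = A \<longrightarrow> reduct {E} Bs = B \<longrightarrow> (\<exists>f. embedding Ls ar f As Bs)"
    by blast
qed

end

theorem mainTheorem10:
  fixes E Lt :: 'l
    and Ls :: "'l set"
    and ar :: "'l \<Rightarrow> nat"
    and Ts :: "('l, 'a) rstruct"
    and prec :: "nat \<Rightarrow> nat \<Rightarrow> bool"
  assumes lang: "countable Ls" "E \<in> Ls" "Lt \<in> Ls" "E \<noteq> Lt" "ar E = 2" "ar Lt = 2"
    and struct: "is_struct Ls ar Ts"
    and countable_inf: "countable (univ Ts)" "infinite (univ Ts)"
    and tour: "tournament E (reduct {E} Ts)"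
    and hom: "homogeneous {E} ar (reduct {E} Ts)"
    and lin: "strict_linear Lt Ts"
    and prec_Q: "\<exists>h :: nat \<Rightarrow> rat. bij h \<and> (\<forall>i j. prec i j \<longleftrightarrow> h i < h j)"
    and EP: "expansion_property {E} Ls ar (Age {E} ar (reduct {E} Ts)) (Age Ls ar Ts)"
  shows "expansion_property {E} Ls ar
           (Age {E} ar (reduct {E} (I_omega_star Lt prec Ts)))
           (Age Ls ar (I_omega_star Lt prec Ts))"
proof -
  obtain h :: "nat \<Rightarrow> rat" where "bij h" and "\<And>i j. prec i j \<longleftrightarrow> h i < h j"
    using prec_Q by blast
  then interpret tournament_copies E Lt Ls ar Ts prec h
    using lang struct countable_inf(2) tour by unfold_locales (auto simp: bij_is_inj)
  show ?thesis
    using expansion_property_I_omega_star EP by (simp add: Age_reduct)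
qed

end
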